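(* Let $a,b,c$ be the vertices of a nondegenerate triangle in $\mathbb{R}^2$, and let $d$ be a point of the closed triangle $\triangle abc$ not lying on the line $ab$. Let $e$ and $f$ be the intersections of the line through $d$ parallel to $ab$ with the segments $ac$ and $bc$ respectively. Then the area of the triangle $\triangle abd$ (the discarded region) is larger than the area of $\triangle ade \cup \triangle bdf$ (the preserved region).
   Context: This describes one step of QuickHull on a planar set: $ab$ is an edge of the current partial hull, $c$ is the intersection of the lines through $a$ and $b$ beyond which no input point lies (so remaining candidate points lie in $\triangle abc$), $d$ is the point farthest from line $ab$ on the outer side, which is inserted into the partial hull; points in $\triangle abd$ are then discarded, while the points in $\triangle ade$ and $\triangle bdf$ are preserved for later steps. *)

theory Defs
  imports "HOL-Analysis.Analysis"
begin

end

theory Submission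
  imports Defs
begin

(* In the affine frame (a; b - a, c - a) write d = a + beta (b - a) + gamma (c - a), with
   beta, gamma >= 0, beta + gamma <= 1, and gamma > 0 because d is off the line ab. The line
   through d parallel to ab meets ac in e = a + gamma (c - a) and bc in
   f = a + (1 - gamma) (b - a) + gamma (c - a). Areas scale by the determinant of affine
   coordinates, so abd, ade and bdf have areas gamma T, beta gamma T and
   (1 - beta - gamma) gamma T, where T is the area of abc: the two preserved triangles together
   have exactly (1 - gamma) times the area of abd. *)

definition cross2 :: "real^2 \<Rightarrow> real^2 \<Rightarrow> real" where
  "cross2 x y = x$1 * y$2 - x$2 * y$1"

lemma cross2_lincomb:
  "cross2 (x *\<^sub>R u + y *\<^sub>R v) (x' *\<^sub>R u + y' *\<^sub>R v) = (x * y' - y * x') * cross2 u v"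
  by (simp add: cross2_def algebra_simps)

lemma measure_triangle:
  fixes A B C :: "real^2"
  shows "measure lebesgue (convex hull {A, B, C}) = \<bar>cross2 (B - A) (C - A)\<bar> / 2"
proof -
  have "convex hull {A, B, C} \<in> sets lborel"
    using finite_imp_compact_convex_hull[of "{A, B, C}"] by (auto dest: compact_imp_closed)
  then have "measure lebesgue (convex hull {A, B, C}) = measure lborel (convex hull {A, B, C})"
    by simp
  also have "\<dots> = \<bar>cross2 (B - A) (C - A)\<bar> / 2"
    by (simp add: content_triangle cross2_def abs_minus_commute algebra_simps)
  finally show ?thesis .
qed

lemma noncollinear_coords_unique:
  fixes a b c :: "'a::real_vector"
  assumes "\<not> collinear {a, b, c}"
    and "x *\<^sub>R (b - a) + y *\<^sub>R (c - a) = x' *\<^sub>R (b - a) + y' *\<^sub>R (c - a)"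
  shows "x = x' \<and> y = y'"
proof (rule ccontr)
  assume neq: "\<not> (x = x' \<and> y = y')"
  have "collinear {0, b - a, c - a}"
  proof (cases "y = y'")
    case True
    with neq assms(2) have "b - a = 0"
      by (metis add_right_cancel scaleR_cancel_right)
    then show ?thesis by (simp add: collinear_lemma)
  next
    case False
    from assms(2) have "(y' - y) *\<^sub>R (c - a) = (x - x') *\<^sub>R (b - a)"
      by (simp add: scaleR_left_diff_distrib algebra_simps)
    with False have "c - a = ((x - x') / (y' - y)) *\<^sub>R (b - a)"
      by (metis right_minus_eq eq_vector_fraction_iff)
    then show ?thesis by (simp add: collinear_lemma)
  qed
  then have "collinear {b, a, c}"
    by (simp add: collinear_3)
  with assms(1) show False
    by (simp add: insert_commute)
qed

lemma cross2_nonzero_if_noncollinear: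
  fixes a b c :: "real^2"
  assumes "\<not> collinear {a, b, c}"
  shows "cross2 (b - a) (c - a) \<noteq> 0"
proof
  let ?u = "b - a" and ?v = "c - a"
  assume "cross2 ?u ?v = 0"
  then have "?v$2 *\<^sub>R ?u + (- ?u$2) *\<^sub>R ?v = 0 *\<^sub>R ?u + 0 *\<^sub>R ?v"
    and "?v$1 *\<^sub>R ?u + (- ?u$1) *\<^sub>R ?v = 0 *\<^sub>R ?u + 0 *\<^sub>R ?v"
    by (auto simp: vec_eq_iff forall_2 cross2_def algebra_simps)
  then have "?v$1 = 0" "?v$2 = 0"
    using noncollinear_coords_unique[OF assms] by blast+
  then have "c = a"
    by (simp add: vec_eq_iff forall_2)
  with assms show False
    by (simp add: insert_commute)
qed

lemma measure_triangle_affine_coords: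
  fixes a b c p q r :: "real^2"
  assumes "p = a + xp *\<^sub>R (b - a) + yp *\<^sub>R (c - a)"
    and "q = a + xq *\<^sub>R (b - a) + yq *\<^sub>R (c - a)"
    and "r = a + xr *\<^sub>R (b - a) + yr *\<^sub>R (c - a)"
  shows "measure lebesgue (convex hull {p, q, r})
           = \<bar>(xq - xp) * (yr - yp) - (yq - yp) * (xr - xp)\<bar> * measure lebesgue (convex hull {a, b, c})"
proof -
  have "q - p = (xq - xp) *\<^sub>R (b - a) + (yq - yp) *\<^sub>R (c - a)"
    and "r - p = (xr - xp) *\<^sub>R (b - a) + (yr - yp) *\<^sub>R (c - a)"
    unfolding assms by (simp_all add: algebra_simps)
  then show ?thesis
    by (simp add: measure_triangle cross2_lincomb abs_mult)
qed

lemma measure_triangle_pos: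
  fixes a b c :: "real^2"
  assumes "\<not> collinear {a, b, c}"
  shows "measure lebesgue (convex hull {a, b, c}) > 0"
  using cross2_nonzero_if_noncollinear[OF assms] by (simp add: measure_triangle)

lemma convex_hull_3_off_side_coords:
  fixes a b c d :: "'a::real_vector"
  assumes "d \<in> convex hull {a, b, c}" and "d \<notin> affine hull {a, b}"
  obtains \<beta> \<gamma> where "0 \<le> \<beta>" "0 < \<gamma>" "\<beta> + \<gamma> \<le> 1"
    and "d = a + \<beta> *\<^sub>R (b - a) + \<gamma> *\<^sub>R (c - a)"
proof -
  obtain \<alpha> \<beta> \<gamma> where weights: "0 \<le> \<alpha>" "0 \<le> \<beta>" "0 \<le> \<gamma>" "\<alpha> + \<beta> + \<gamma> = 1"
    and d: "d = \<alpha> *\<^sub>R a + \<beta> *\<^sub>R b + \<gamma> *\<^sub>R c"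
    using assms(1) unfolding convex_hull_3 by blast
  have "\<gamma> \<noteq> 0"
  proof
    assume "\<gamma> = 0"
    with weights d have "d \<in> affine hull {a, b}"
      unfolding affine_hull_2 by auto
    with assms(2) show False ..
  qed
  moreover have "d = a + \<beta> *\<^sub>R (b - a) + \<gamma> *\<^sub>R (c - a)"
    using weights unfolding d by (simp add: algebra_simps flip: scaleR_add_left)
  ultimately show thesis
    using that[of \<beta> \<gamma>] weights by simp
qed

lemma parallel_to_side_meets_segment_ac:
  fixes a b c d e :: "'a::real_vector"
  assumes "\<not> collinear {a, b, c}" and "d = a + \<beta> *\<^sub>R (b - a) + \<gamma> *\<^sub>R (c - a)"
    and "e \<in> closed_segment a c" and "e = d + t *\<^sub>R (b - a)"
  shows "e = a + \<gamma> *\<^sub>R (c - a)"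
proof -
  obtain u where "e = (1 - u) *\<^sub>R a + u *\<^sub>R c"
    using assms(3) unfolding in_segment by blast
  then have e: "e = a + u *\<^sub>R (c - a)"
    by (simp add: algebra_simps)
  have "e = a + (\<beta> + t) *\<^sub>R (b - a) + \<gamma> *\<^sub>R (c - a)"
    unfolding assms(4) assms(2) by (simp add: algebra_simps)
  with e have "(\<beta> + t) *\<^sub>R (b - a) + \<gamma> *\<^sub>R (c - a) = 0 *\<^sub>R (b - a) + u *\<^sub>R (c - a)"
    by simp
  with e show ?thesis
    using noncollinear_coords_unique[OF assms(1)] by blast
qed

lemma parallel_to_side_meets_segment_bc:
  fixes a b c d f :: "'a::real_vector"
  assumes "\<not> collinear {a, b, c}" and "d = a + \<beta> *\<^sub>R (b - a) + \<gamma> *\<^sub>R (c - a)"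
    and "f \<in> closed_segment b c" and "f = d + t *\<^sub>R (b - a)"
  shows "f = a + (1 - \<gamma>) *\<^sub>R (b - a) + \<gamma> *\<^sub>R (c - a)"
proof -
  obtain v where "f = (1 - v) *\<^sub>R b + v *\<^sub>R c"
    using assms(3) unfolding in_segment by blast
  then have f: "f = a + (1 - v) *\<^sub>R (b - a) + v *\<^sub>R (c - a)"
    by (simp add: algebra_simps)
  have "f = a + (\<beta> + t) *\<^sub>R (b - a) + \<gamma> *\<^sub>R (c - a)"
    unfolding assms(4) assms(2) by (simp add: algebra_simps)
  with f have "(\<beta> + t) *\<^sub>R (b - a) + \<gamma> *\<^sub>R (c - a) = (1 - v) *\<^sub>R (b - a) + v *\<^sub>R (c - a)"
    by simp
  with f show ?thesis
    using noncollinear_coords_unique[OF assms(1)] by blast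
qed

lemma measure_triangles_cut_by_parallel:
  fixes a b c d e f :: "real^2"
  assumes "0 \<le> \<beta>" "0 \<le> \<gamma>" "\<beta> + \<gamma> \<le> 1"
    and d: "d = a + \<beta> *\<^sub>R (b - a) + \<gamma> *\<^sub>R (c - a)"
    and e: "e = a + \<gamma> *\<^sub>R (c - a)"
    and f: "f = a + (1 - \<gamma>) *\<^sub>R (b - a) + \<gamma> *\<^sub>R (c - a)"
  shows "measure lebesgue (convex hull {a, d, e}) + measure lebesgue (convex hull {b, d, f})
           = (1 - \<gamma>) * measure lebesgue (convex hull {a, b, d})"
proof -
  define T where "T = measure lebesgue (convex hull {a, b, c})"
  have "measure lebesgue (convex hull {a, b, d}) = \<gamma> * T"
    using measure_triangle_affine_coords[where p = a and xp = 0 and yp = 0 and q = b and xq = 1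
        and yq = 0 and r = d and xr = \<beta> and yr = \<gamma>] d assms(2)
    by (simp add: T_def)
  moreover have "measure lebesgue (convex hull {a, d, e}) = \<beta> * \<gamma> * T"
    using measure_triangle_affine_coords[where p = a and xp = 0 and yp = 0 and q = d and xq = \<beta>
        and yq = \<gamma> and r = e and xr = 0 and yr = \<gamma>] d e assms(1,2)
    by (simp add: T_def abs_mult)
  moreover have "measure lebesgue (convex hull {b, d, f}) = (1 - \<beta> - \<gamma>) * \<gamma> * T"
  proof -
    have "(\<beta> - 1) * \<gamma> - (\<gamma> - 0) * (1 - \<gamma> - 1) = - ((1 - \<beta> - \<gamma>) * \<gamma>)"
      by (simp add: algebra_simps)
    then show ?thesis
      using measure_triangle_affine_coords[where p = b and xp = 1 and yp = 0 and q = d and xq = \<beta>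
          and yq = \<gamma> and r = f and xr = "1 - \<gamma>" and yr = \<gamma>] d f assms
      by (simp add: T_def abs_mult)
  qed
  ultimately show ?thesis
    by (simp add: algebra_simps)
qed

theorem lemma1:
  fixes a b c d e f :: "real^2"
  assumes nondeg: "\<not> collinear {a, b, c}"
    and d_in: "d \<in> convex hull {a, b, c}"
    and d_off: "d \<notin> affine hull {a, b}"
    and e_seg: "e \<in> closed_segment a c" and e_line: "\<exists>t::real. e = d + t *\<^sub>R (b - a)"
    and f_seg: "f \<in> closed_segment b c" and f_line: "\<exists>t::real. f = d + t *\<^sub>R (b - a)"
  shows "measure lebesgue (convex hull {a, d, e} \<union> convex hull {b, d, f})
           < measure lebesgue (convex hull {a, b, d})"
proof -
  obtain \<beta> \<gamma> where coords: "0 \<le> \<beta>" "0 < \<gamma>" "\<beta> + \<gamma> \<le> 1"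
    and d: "d = a + \<beta> *\<^sub>R (b - a) + \<gamma> *\<^sub>R (c - a)"
    using convex_hull_3_off_side_coords[OF d_in d_off] by blast
  have e: "e = a + \<gamma> *\<^sub>R (c - a)"
    using e_line parallel_to_side_meets_segment_ac[OF nondeg d e_seg] by blast
  have f: "f = a + (1 - \<gamma>) *\<^sub>R (b - a) + \<gamma> *\<^sub>R (c - a)"
    using f_line parallel_to_side_meets_segment_bc[OF nondeg d f_seg] by blast
  have "a \<noteq> b"
    using nondeg by auto
  with d_off have "measure lebesgue (convex hull {a, b, d}) > 0"
    by (simp add: measure_triangle_pos collinear_3_affine_hull)
  have "measure lebesgue (convex hull {a, d, e} \<union> convex hull {b, d, f})
      \<le> measure lebesgue (convex hull {a, d, e}) + measure lebesgue (convex hull {b, d, f})"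
    by (intro measure_Un_le fmeasurableD lmeasurable_compact finite_imp_compact_convex_hull) auto
  also have "\<dots> = (1 - \<gamma>) * measure lebesgue (convex hull {a, b, d})"
    using measure_triangles_cut_by_parallel[OF _ _ _ d e f] coords by simp
  also have "\<dots> < measure lebesgue (convex hull {a, b, d})"
    using \<open>measure lebesgue (convex hull {a, b, d}) > 0\<close> \<open>\<gamma> > 0\<close> by simp
  finally show ?thesis .
qed

end
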